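(* Let $q=3$ and $n\geq 3$, and let $c>0$ be a real number such that $k=\frac{n}{3}(\log(2n)+c)$ is an integer. Then $$\Vert \nu_n^{*k}-\pi_n\Vert_{TV}^2\leq \frac52\left(e^{e^{-c}}-1\right).$$
   Context: For integers $n\geq1$, $q\geq2$, the Hamming scheme $H(n,q)$ is the graph with vertex set $X_n=\{0,1,\dots,q-1\}^n$ in which $x$ and $x'$ are adjacent ($x\sim x'$) iff they differ in exactly one coordinate. The simple random walk has transition probability $p_n(x,x')=\frac{1}{n(q-1)}$ if $x\sim x'$ and $0$ otherwise. Let $p_n^{(k)}$ denote the $k$-step transition probability ($p_n^{(0)}(x,x')=\delta_{x,x'}$), $x^{(0)}=(0,\dots,0)$, and $\nu_n^{*k}(x)=p_n^{(k)}(x^{(0)},x)$. $\pi_n$ is the uniform probability measure on $X_n$. For measures $\mu,\nu$ on $X_n$, $\Vert\mu-\nu\Vert_{TV}=\max_{S\subset X_n}|\mu(S)-\nu(S)|$. *)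

theory Defs
  imports Complex_Main
begin

definition hamming_space :: "nat \<Rightarrow> nat \<Rightarrow> nat list set" where
  "hamming_space n q = {xs. length xs = n \<and> (\<forall>a\<in>set xs. a < q)}"

definition hamming_adj :: "nat list \<Rightarrow> nat list \<Rightarrow> bool" where
  "hamming_adj xs ys \<longleftrightarrow> length xs = length ys \<and>
     card {i. i < length xs \<and> xs ! i \<noteq> ys ! i} = 1"

definition hamming_p :: "nat \<Rightarrow> nat \<Rightarrow> nat list \<Rightarrow> nat list \<Rightarrow> real" where
  "hamming_p n q x y = (if hamming_adj x y then 1 / (real n * (real q - 1)) else 0)"

fun hamming_pk :: "nat \<Rightarrow> nat \<Rightarrow> nat \<Rightarrow> nat list \<Rightarrow> nat list \<Rightarrow> real" where
  "hamming_pk n q 0 x y = (if x = y then 1 else 0)"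
| "hamming_pk n q (Suc k) x y =
     (\<Sum>z\<in>hamming_space n q. hamming_pk n q k x z * hamming_p n q z y)"

definition hamming_nu :: "nat \<Rightarrow> nat \<Rightarrow> nat \<Rightarrow> nat list \<Rightarrow> real" where
  "hamming_nu n q k x = hamming_pk n q k (replicate n 0) x"

definition hamming_pi :: "nat \<Rightarrow> nat \<Rightarrow> nat list \<Rightarrow> real" where
  "hamming_pi n q x = 1 / real (card (hamming_space n q))"

definition tv_dist :: "'a set \<Rightarrow> ('a \<Rightarrow> real) \<Rightarrow> ('a \<Rightarrow> real) \<Rightarrow> real" where
  "tv_dist X \<mu> \<nu> = Max {\<bar>(\<Sum>x\<in>S. \<mu> x) - (\<Sum>x\<in>S. \<nu> x)\<bar> | S. S \<subseteq> X}"

end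

theory Submission
  imports Defs "HOL-Analysis.Analysis"
begin

text \<open>The walk started at the origin stays in the span of the products \<open>hamming_char q S\<close> of
  centred indicators of the symbol \<open>0\<close>. They are orthogonal eigenvectors of the transition
  operator, with eigenvalue \<open>1 - q s / ((q - 1) n)\<close> for \<open>s = card S\<close>, so by Parseval \<open>q ^ n\<close>
  times the squared \<open>\<ell>\<^sub>2\<close>-distance of the \<open>k\<close>-step distribution to the uniform one is the sum over
  nonempty \<open>S\<close> of \<open>(q - 1) ^ s\<close> times the \<open>2 k\<close>-th power of the eigenvalue. For \<open>q = 3\<close> and
  the given \<open>k\<close>, the nonnegative eigenvalues contribute at most
  \<open>(1 + exp (- c) / n) ^ n - 1 \<le> exp (exp (- c)) - 1\<close> by \<open>1 - x \<le> exp (- x)\<close>, and the negative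
  ones, which lie in \<open>[-1/2, 0)\<close>, at most \<open>3 ^ n / 4 ^ k \<le> 9 exp (- c)\<close>. Cauchy-Schwarz turns
  the \<open>\<ell>\<^sub>2\<close> bound into the total variation bound.\<close>

lemma finite_hamming_space: "finite (hamming_space n q)"
proof -
  have "hamming_space n q \<subseteq> {xs. set xs \<subseteq> {..<q} \<and> length xs = n}"
    by (auto simp: hamming_space_def)
  thus ?thesis using finite_lists_length_eq[of "{..<q}" n] finite_subset by blast
qed

lemma hamming_space_0: "hamming_space 0 q = {[]}"
  by (auto simp: hamming_space_def)

lemma hamming_space_Suc:
  "hamming_space (Suc n) q = (\<lambda>(a, xs). a # xs) ` ({..<q} \<times> hamming_space n q)"
proof
  show "hamming_space (Suc n) q \<subseteq> (\<lambda>(a, xs). a # xs) ` ({..<q} \<times> hamming_space n q)"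
  proof
    fix x assume "x \<in> hamming_space (Suc n) q"
    then obtain a xs where "x = a # xs" "length xs = n" "a < q" "\<forall>b\<in>set xs. b < q"
      by (cases x) (auto simp: hamming_space_def)
    thus "x \<in> (\<lambda>(a, xs). a # xs) ` ({..<q} \<times> hamming_space n q)"
      by (auto simp: hamming_space_def image_iff)
  qed
qed (auto simp: hamming_space_def)

lemma hamming_space_update:
  "y \<in> hamming_space n q \<Longrightarrow> b < q \<Longrightarrow> y[i := b] \<in> hamming_space n q"
  by (auto simp: hamming_space_def dest!: set_update_subset_insert[THEN subsetD])

lemma sum_prod_hamming_space:
  "(\<Sum>x\<in>hamming_space n q. \<Prod>i<n. h i (x ! i) :: real) = (\<Prod>i<n. \<Sum>a<q. h i a)"
proof (induction n arbitrary: h)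
  case 0
  then show ?case by (simp add: hamming_space_0)
next
  case (Suc n)
  have inj: "inj_on (\<lambda>(a, xs). a # xs) ({..<q} \<times> hamming_space n q)"
    by (auto simp: inj_on_def)
  have "(\<Sum>x\<in>hamming_space (Suc n) q. \<Prod>i<Suc n. h i (x ! i))
      = (\<Sum>(a, xs)\<in>{..<q} \<times> hamming_space n q. h 0 a * (\<Prod>i<n. h (Suc i) (xs ! i)))"
    unfolding hamming_space_Suc sum.reindex[OF inj]
    by (intro sum.cong refl) (auto simp: prod.lessThan_Suc_shift simp del: prod.lessThan_Suc)
  also have "\<dots> = (\<Sum>a<q. h 0 a) * (\<Sum>xs\<in>hamming_space n q. \<Prod>i<n. h (Suc i) (xs ! i))"
    by (simp add: sum_product sum.cartesian_product case_prod_beta)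
  also have "\<dots> = (\<Prod>i<Suc n. \<Sum>a<q. h i a)"
    using Suc.IH[of "\<lambda>i. h (Suc i)"] by (simp add: prod.lessThan_Suc_shift del: prod.lessThan_Suc)
  finally show ?case .
qed

lemma card_hamming_space: "real (card (hamming_space n q)) = real q ^ n"
  using sum_prod_hamming_space[where h = "\<lambda>_ _. 1"] by simp

lemma hamming_neighbours:
  assumes y: "y \<in> hamming_space n q"
  shows "{z \<in> hamming_space n q. hamming_adj z y}
       = (\<lambda>(i, b). y[i := b]) ` (SIGMA i:{..<n}. {..<q} - {y ! i})"
proof
  have ly: "length y = n" using y by (simp add: hamming_space_def)
  show "{z \<in> hamming_space n q. hamming_adj z y} \<subseteq> (\<lambda>(i, b). y[i := b]) ` (SIGMA i:{..<n}. {..<q} - {y ! i})"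
  proof
    fix z assume z: "z \<in> {z \<in> hamming_space n q. hamming_adj z y}"
    hence lz: "length z = n" and zq: "\<forall>a\<in>set z. a < q" by (auto simp: hamming_space_def)
    from z have "card {i. i < length z \<and> z ! i \<noteq> y ! i} = 1" unfolding hamming_adj_def by blast
    then obtain i where D: "{i. i < length z \<and> z ! i \<noteq> y ! i} = {i}" by (rule card_1_singletonE)
    hence i: "i < n" "z ! i \<noteq> y ! i" using lz by auto
    have "z = y[i := z ! i]"
    proof (rule nth_equalityI)
      show "length z = length (y[i := z ! i])" using lz ly by simp
      fix j assume "j < length z"
      thus "z ! j = y[i := z ! i] ! j" using D lz ly
        by (cases "j = i") (auto simp: nth_list_update)
    qed
    moreover have "z ! i < q" using zq i lz by auto
    ultimately show "z \<in> (\<lambda>(i, b). y[i := b]) ` (SIGMA i:{..<n}. {..<q} - {y ! i})"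
      using i by (auto simp: image_iff intro!: bexI[of _ "(i, z ! i)"])
  qed
  show "(\<lambda>(i, b). y[i := b]) ` (SIGMA i:{..<n}. {..<q} - {y ! i}) \<subseteq> {z \<in> hamming_space n q. hamming_adj z y}"
  proof
    fix z assume "z \<in> (\<lambda>(i, b). y[i := b]) ` (SIGMA i:{..<n}. {..<q} - {y ! i})"
    then obtain i b where i: "i < n" "b < q" "b \<noteq> y ! i" and z: "z = y[i := b]" by auto
    have "{j. j < length (y[i := b]) \<and> y[i := b] ! j \<noteq> y ! j} = {i}"
      using i ly by (auto simp: nth_list_update split: if_splits)
    thus "z \<in> {z \<in> hamming_space n q. hamming_adj z y}"
      using hamming_space_update[OF y i(2)] z by (simp add: hamming_adj_def)
  qed
qed

lemma inj_on_hamming_neighbours: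
  assumes "y \<in> hamming_space n q"
  shows "inj_on (\<lambda>(i, b). y[i := b]) (SIGMA i:{..<n}. {..<q} - {y ! i})"
proof (rule inj_onI)
  have ly: "length y = n" using assms by (simp add: hamming_space_def)
  fix p p' assume p: "p \<in> (SIGMA i:{..<n}. {..<q} - {y ! i})" "p' \<in> (SIGMA i:{..<n}. {..<q} - {y ! i})"
    and eq: "(\<lambda>(i, b). y[i := b]) p = (\<lambda>(i, b). y[i := b]) p'"
  obtain i b i' b' where pp: "p = (i, b)" "p' = (i', b')" by fastforce
  have h: "i < n" "b \<noteq> y ! i" "y[i := b] = y[i' := b']" using p eq pp by auto
  have "i = i'"
  proof (rule ccontr)
    assume "i \<noteq> i'"
    hence "y[i' := b'] ! i = y ! i" by simp
    with h ly show False by (metis nth_list_update_eq)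
  qed
  with h ly pp show "p = p'" by (metis nth_list_update_eq)
qed

definition centred_indicator :: "nat \<Rightarrow> nat \<Rightarrow> real" where
  "centred_indicator q a = of_bool (a = 0) - 1 / real q"

definition hamming_char :: "nat \<Rightarrow> nat set \<Rightarrow> nat list \<Rightarrow> real" where
  "hamming_char q S x = (\<Prod>i\<in>S. centred_indicator q (x ! i))"

definition hamming_eigenvalue :: "nat \<Rightarrow> nat \<Rightarrow> nat \<Rightarrow> real" where
  "hamming_eigenvalue n q s = 1 - real q * real s / ((real q - 1) * real n)"

lemma sum_centred_indicator: "q > 0 \<Longrightarrow> (\<Sum>a<q. centred_indicator q a) = 0"
  by (simp add: centred_indicator_def sum_subtractf)

lemma sum_centred_indicator_squared:
  assumes "q > 0"
  shows "(\<Sum>a<q. (centred_indicator q a)\<^sup>2) = (real q - 1) / real q"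
proof -
  obtain m where q: "q = Suc m" using assms gr0_implies_Suc by blast
  have "(\<Sum>a<q. (centred_indicator q a)\<^sup>2) = (1 - 1 / real q)\<^sup>2 + (real q - 1) / (real q)\<^sup>2"
    unfolding q by (simp add: sum.lessThan_Suc_shift centred_indicator_def power_divide del: sum.lessThan_Suc)
  also have "\<dots> = (real q - 1) / real q"
    using assms by (simp add: field_simps power2_eq_square)
  finally show ?thesis .
qed

lemma hamming_char_extend:
  "S \<subseteq> {..<n} \<Longrightarrow> hamming_char q S x = (\<Prod>i<n. if i \<in> S then centred_indicator q (x ! i) else 1)"
  unfolding hamming_char_def by (subst prod.inter_restrict[symmetric]) (auto intro: prod.cong)

lemma hamming_char_orthogonal:
  assumes "q > 0" "S \<subseteq> {..<n}" "T \<subseteq> {..<n}"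
  shows "(\<Sum>x\<in>hamming_space n q. hamming_char q S x * hamming_char q T x)
       = (if S = T then ((real q - 1) / real q) ^ card S * real q ^ (n - card S) else 0)"
proof -
  define h where "h i a = (if i \<in> S then centred_indicator q a else 1) * (if i \<in> T then centred_indicator q a else 1)"
    for i a
  have "(\<Sum>x\<in>hamming_space n q. hamming_char q S x * hamming_char q T x)
      = (\<Prod>i<n. \<Sum>a<q. h i a)"
    unfolding hamming_char_extend[OF assms(2)] hamming_char_extend[OF assms(3)]
      prod.distrib[symmetric] h_def by (rule sum_prod_hamming_space)
  also have "\<dots> = (\<Prod>i<n. if i \<in> S \<and> i \<in> T then (real q - 1) / real q
                          else if i \<in> S \<or> i \<in> T then 0 else real q)"
    using assms(1) by (intro prod.cong)
      (auto simp: h_def sum_centred_indicator sum_centred_indicator_squared[unfolded power2_eq_square])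
  also have "\<dots> = (if S = T then ((real q - 1) / real q) ^ card S * real q ^ (n - card S) else 0)"
  proof (cases "S = T")
    case True
    have "card ({..<n} - S) = n - card S"
      using assms(2) by (simp add: card_Diff_subset finite_subset)
    moreover have "{..<n} \<inter> S = S" "{..<n} \<inter> - S = {..<n} - S" using assms(2) by auto
    ultimately show ?thesis using True by (simp add: prod.If_cases)
  next
    case False
    then obtain i where "i \<in> S \<and> i \<notin> T \<or> i \<notin> S \<and> i \<in> T" by blast
    moreover from this have "i < n" using assms by auto
    ultimately show ?thesis using False by (auto intro!: prod_zero)
  qed
  finally show ?thesis .
qed

lemma hamming_char_remove:
  "finite S \<Longrightarrow> i \<in> S \<Longrightarrow> hamming_char q S y = centred_indicator q (y ! i) * hamming_char q (S - {i}) y"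
  unfolding hamming_char_def by (simp add: prod.remove)

lemma hamming_char_update_notin:
  "i \<notin> S \<Longrightarrow> hamming_char q S (y[i := b]) = hamming_char q S y"
  unfolding hamming_char_def by (intro prod.cong refl) (metis nth_list_update_neq)

lemma hamming_char_update_in:
  assumes "finite S" "i \<in> S" "i < length y"
  shows "hamming_char q S (y[i := b]) = centred_indicator q b * hamming_char q (S - {i}) y"
  using hamming_char_remove[OF assms(1,2), of q "y[i := b]"] hamming_char_update_notin[of i "S - {i}"]
    assms(3) by simp

lemma sum_neighbours_hamming_char:
  assumes y: "y \<in> hamming_space n q" and S: "S \<subseteq> {..<n}" and "i < n" "q > 0"
  shows "(\<Sum>b\<in>{..<q} - {y ! i}. hamming_char q S (y[i := b]))
       = (if i \<in> S then -1 else real q - 1) * hamming_char q S y"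
proof -
  have ly: "length y = n" and yi: "y ! i < q" using y \<open>i < n\<close> by (auto simp: hamming_space_def)
  have fS: "finite S" using S finite_subset by blast
  show ?thesis
  proof (cases "i \<in> S")
    case True
    have "(\<Sum>b\<in>{..<q} - {y ! i}. centred_indicator q b) = - centred_indicator q (y ! i)"
      using sum_diff1[of "{..<q}" "centred_indicator q" "y ! i"] yi sum_centred_indicator[OF \<open>q > 0\<close>] by simp
    moreover have "(\<Sum>b\<in>{..<q} - {y ! i}. hamming_char q S (y[i := b]))
        = (\<Sum>b\<in>{..<q} - {y ! i}. centred_indicator q b) * hamming_char q (S - {i}) y"
      using True \<open>i < n\<close> ly by (simp add: hamming_char_update_in[OF fS] sum_distrib_right)
    ultimately show ?thesis using True by (simp add: hamming_char_remove[OF fS True])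
  next
    case False
    have "card ({..<q} - {y ! i}) = q - 1" using yi by simp
    thus ?thesis using False yi by (simp add: hamming_char_update_notin of_nat_diff)
  qed
qed

text \<open>Each neighbour of \<open>y\<close> changes one coordinate \<open>i\<close>; since the centred indicator sums
  to zero, the other \<open>q - 1\<close> values of that coordinate contribute \<open>-1\<close> times its factor when
  \<open>i \<in> S\<close>, and \<open>q - 1\<close> times it otherwise.\<close>
lemma hamming_char_eigenvector:
  assumes y: "y \<in> hamming_space n q" and S: "S \<subseteq> {..<n}" and "n \<ge> 1" "q \<ge> 2"
  shows "(\<Sum>z\<in>hamming_space n q. hamming_char q S z * hamming_p n q z y)
       = hamming_eigenvalue n q (card S) * hamming_char q S y"
proof -
  define N where "N = real n * (real q - 1)"
  have "(\<Sum>z\<in>hamming_space n q. hamming_char q S z * hamming_p n q z y)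
      = (\<Sum>z\<in>{z \<in> hamming_space n q. hamming_adj z y}. hamming_char q S z / N)"
    by (simp add: hamming_p_def N_def sum.inter_filter finite_hamming_space if_distrib
        cong: if_cong)
  also have "\<dots> = (\<Sum>(i, b)\<in>(SIGMA i:{..<n}. {..<q} - {y ! i}). hamming_char q S (y[i := b]) / N)"
    unfolding hamming_neighbours[OF y] sum.reindex[OF inj_on_hamming_neighbours[OF y]]
    by (simp add: case_prod_unfold)
  also have "\<dots> = (\<Sum>i<n. (if i \<in> S then -1 else real q - 1) * hamming_char q S y / N)"
    using assms by (simp add: sum.Sigma[symmetric] sum_divide_distrib[symmetric]
        sum_neighbours_hamming_char)
  also have "\<dots> = (\<Sum>i<n. if i \<in> S then -1 else real q - 1) * hamming_char q S y / N"
    by (simp add: sum_distrib_right sum_divide_distrib)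
  also have "(\<Sum>i<n. if i \<in> S then -1 else real q - 1) = - real (card S) + (real q - 1) * (real n - real (card S))"
  proof -
    have "{..<n} \<inter> S = S" "{..<n} \<inter> - S = {..<n} - S" using S by auto
    moreover have "real (card ({..<n} - S)) = real n - real (card S)"
      using S card_mono[OF _ S] by (simp add: card_Diff_subset finite_subset of_nat_diff)
    ultimately show ?thesis by (simp add: sum.If_cases)
  qed
  finally show ?thesis using assms by (simp add: hamming_eigenvalue_def N_def field_simps)
qed

definition hamming_nu_coeff :: "nat \<Rightarrow> nat \<Rightarrow> nat \<Rightarrow> nat set \<Rightarrow> real" where
  "hamming_nu_coeff n q k S = (1 / real q) ^ (n - card S) * hamming_eigenvalue n q (card S) ^ k"

lemma hamming_nu_expansion:
  assumes "x \<in> hamming_space n q" "n \<ge> 1" "q \<ge> 2"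
  shows "hamming_nu n q k x = (\<Sum>S\<in>Pow {..<n}. hamming_nu_coeff n q k S * hamming_char q S x)"
  unfolding hamming_nu_def using assms(1)
proof (induction k arbitrary: x)
  case 0
  have lx: "length x = n" using 0 by (simp add: hamming_space_def)
  have "hamming_pk n q 0 (replicate n 0) x = (\<Prod>i<n. of_bool (x ! i = 0))"
    using lx by (auto simp: list_eq_iff_nth_eq intro: prod_zero)
  also have "\<dots> = (\<Prod>i<n. centred_indicator q (x ! i) + 1 / real q)"
    by (simp add: centred_indicator_def)
  also have "\<dots> = (\<Sum>S\<in>Pow {..<n}. hamming_char q S x * (\<Prod>i\<in>{..<n} - S. 1 / real q))"
    by (simp add: prod_add hamming_char_def)
  also have "\<dots> = (\<Sum>S\<in>Pow {..<n}. hamming_nu_coeff n q 0 S * hamming_char q S x)"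
    by (intro sum.cong refl) (auto simp: hamming_nu_coeff_def card_Diff_subset finite_subset)
  finally show ?case .
next
  case (Suc k)
  have "hamming_pk n q (Suc k) (replicate n 0) x
      = (\<Sum>z\<in>hamming_space n q. (\<Sum>S\<in>Pow {..<n}. hamming_nu_coeff n q k S * hamming_char q S z) * hamming_p n q z x)"
    using Suc.IH by simp
  also have "\<dots> = (\<Sum>S\<in>Pow {..<n}. hamming_nu_coeff n q k S *
                     (\<Sum>z\<in>hamming_space n q. hamming_char q S z * hamming_p n q z x))"
    by (simp add: sum_distrib_right sum_distrib_left mult.assoc sum.swap[of _ "hamming_space n q"])
  also have "\<dots> = (\<Sum>S\<in>Pow {..<n}. hamming_nu_coeff n q (Suc k) S * hamming_char q S x)"
    using Suc.prems assms by (intro sum.cong refl) (simp add: hamming_char_eigenvector hamming_nu_coeff_def)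
  finally show ?case .
qed

lemma hamming_nu_minus_pi_expansion:
  assumes "x \<in> hamming_space n q" "n \<ge> 1" "q \<ge> 2"
  shows "hamming_nu n q k x - hamming_pi n q x
       = (\<Sum>S\<in>Pow {..<n} - {{}}. hamming_nu_coeff n q k S * hamming_char q S x)"
proof -
  have "hamming_nu_coeff n q k {} * hamming_char q {} x = hamming_pi n q x"
    by (simp add: hamming_nu_coeff_def hamming_eigenvalue_def hamming_char_def hamming_pi_def
        card_hamming_space power_one_over)
  thus ?thesis
    using hamming_nu_expansion[OF assms] by (simp add: sum.remove[of _ "{}"])
qed

lemma sum_hamming_nu_minus_pi:
  assumes "n \<ge> 1" "q \<ge> 2"
  shows "(\<Sum>x\<in>hamming_space n q. hamming_nu n q k x - hamming_pi n q x) = 0"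
proof -
  have "(\<Sum>x\<in>hamming_space n q. hamming_nu n q k x - hamming_pi n q x)
     = (\<Sum>S\<in>Pow {..<n} - {{}}. hamming_nu_coeff n q k S * (\<Sum>x\<in>hamming_space n q. hamming_char q S x * hamming_char q {} x))"
    using assms by (simp add: hamming_nu_minus_pi_expansion sum.swap[of _ "hamming_space n q"]
        sum_distrib_left hamming_char_def)
  also have "\<dots> = 0"
    using assms by (intro sum.neutral) (auto simp: hamming_char_orthogonal)
  finally show ?thesis .
qed

lemma l2_hamming_nu_minus_pi:
  assumes "n \<ge> 1" "q \<ge> 2"
  shows "real q ^ n * (\<Sum>x\<in>hamming_space n q. (hamming_nu n q k x - hamming_pi n q x)\<^sup>2)
       = (\<Sum>S\<in>Pow {..<n} - {{}}. (real q - 1) ^ card S * hamming_eigenvalue n q (card S) ^ (2 * k))"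
proof -
  let ?P = "Pow {..<n} - {{}}"
  have "(\<Sum>x\<in>hamming_space n q. (hamming_nu n q k x - hamming_pi n q x)\<^sup>2)
     = (\<Sum>S\<in>?P. \<Sum>T\<in>?P. hamming_nu_coeff n q k S * hamming_nu_coeff n q k T *
           (\<Sum>x\<in>hamming_space n q. hamming_char q S x * hamming_char q T x))"
    using assms by (simp add: hamming_nu_minus_pi_expansion power2_eq_square sum_product
        sum_distrib_left sum.swap[of _ "hamming_space n q"] mult_ac)
  also have "\<dots> = (\<Sum>S\<in>?P. (hamming_nu_coeff n q k S)\<^sup>2 *
                     (((real q - 1) / real q) ^ card S * real q ^ (n - card S)))"
    using assms by (simp add: hamming_char_orthogonal power2_eq_square if_distrib sum.delta cong: if_cong)
  finally have "real q ^ n * (\<Sum>x\<in>hamming_space n q. (hamming_nu n q k x - hamming_pi n q x)\<^sup>2)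
      = (\<Sum>S\<in>?P. real q ^ n * (hamming_nu_coeff n q k S)\<^sup>2 *
                  (((real q - 1) / real q) ^ card S * real q ^ (n - card S)))"
    by (simp add: sum_distrib_left mult.assoc)
  also have "\<dots> = (\<Sum>S\<in>?P. (real q - 1) ^ card S * hamming_eigenvalue n q (card S) ^ (2 * k))"
  proof (intro sum.cong refl)
    fix S assume "S \<in> ?P"
    hence "card S \<le> n" using card_mono[of "{..<n}" S] by auto
    then obtain m where m: "n = card S + m" using le_Suc_ex by blast
    show "real q ^ n * (hamming_nu_coeff n q k S)\<^sup>2 * (((real q - 1) / real q) ^ card S * real q ^ (n - card S))
        = (real q - 1) ^ card S * hamming_eigenvalue n q (card S) ^ (2 * k)"
      using assms unfolding hamming_nu_coeff_def m
      by (simp add: power_add power_mult_distrib power_divide power_mult power2_eq_square field_simps)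
  qed
  finally show ?thesis .
qed

lemma tv_dist_nonneg: "finite X \<Longrightarrow> 0 \<le> tv_dist X \<mu> \<nu>"
  unfolding tv_dist_def by (rule Max_ge_iff[THEN iffD2]) (auto intro!: exI[of _ "{}"])

lemma tv_dist_le_half_sum_abs:
  fixes \<mu> \<nu> :: "'a \<Rightarrow> real"
  assumes X: "finite X" and balanced: "(\<Sum>x\<in>X. \<mu> x - \<nu> x) = 0"
  shows "tv_dist X \<mu> \<nu> \<le> (\<Sum>x\<in>X. \<bar>\<mu> x - \<nu> x\<bar>) / 2"
proof -
  let ?d = "\<lambda>x. \<mu> x - \<nu> x"
  have "\<bar>(\<Sum>x\<in>S. \<mu> x) - (\<Sum>x\<in>S. \<nu> x)\<bar> \<le> (\<Sum>x\<in>X. \<bar>?d x\<bar>) / 2" if S: "S \<subseteq> X" for S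
  proof -
    have split: "(\<Sum>x\<in>X. f x) = (\<Sum>x\<in>X - S. f x) + (\<Sum>x\<in>S. f x)" for f :: "'a \<Rightarrow> real"
      using sum.subset_diff[OF S X] .
    have "2 * \<bar>\<Sum>x\<in>S. ?d x\<bar> = \<bar>(\<Sum>x\<in>S. ?d x) - (\<Sum>x\<in>X - S. ?d x)\<bar>"
      using balanced split[of ?d] by linarith
    also have "\<dots> \<le> (\<Sum>x\<in>S. \<bar>?d x\<bar>) + (\<Sum>x\<in>X - S. \<bar>?d x\<bar>)"
      by (rule order_trans[OF abs_triangle_ineq4 add_mono[OF sum_abs sum_abs]])
    also have "\<dots> = (\<Sum>x\<in>X. \<bar>?d x\<bar>)" using split[of "\<lambda>x. \<bar>?d x\<bar>"] by simp
    finally show ?thesis by (simp add: sum_subtractf)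
  qed
  moreover have "finite {\<bar>(\<Sum>x\<in>S. \<mu> x) - (\<Sum>x\<in>S. \<nu> x)\<bar> | S. S \<subseteq> X}"
    using X by (simp add: setcompr_eq_image)
  ultimately show ?thesis
    unfolding tv_dist_def by (subst Max_le_iff) auto
qed

lemma tv_dist_squared_le_l2:
  fixes \<mu> \<nu> :: "'a \<Rightarrow> real"
  assumes "finite X" and "(\<Sum>x\<in>X. \<mu> x - \<nu> x) = 0"
  shows "(tv_dist X \<mu> \<nu>)\<^sup>2 \<le> real (card X) * (\<Sum>x\<in>X. (\<mu> x - \<nu> x)\<^sup>2) / 4"
proof -
  have "(tv_dist X \<mu> \<nu>)\<^sup>2 \<le> ((\<Sum>x\<in>X. \<bar>\<mu> x - \<nu> x\<bar>) / 2)\<^sup>2"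
    using assms by (intro power_mono tv_dist_le_half_sum_abs tv_dist_nonneg)
  also have "\<dots> \<le> real (card X) * (\<Sum>x\<in>X. (\<mu> x - \<nu> x)\<^sup>2) / 4"
    using Cauchy_Schwarz_ineq_sum[of "\<lambda>_. 1" "\<lambda>x. \<bar>\<mu> x - \<nu> x\<bar>" X]
    by (simp add: power_divide)
  finally show ?thesis .
qed

lemma sum_Pow_power_card: "finite A \<Longrightarrow> (\<Sum>S\<in>Pow A. (a::real) ^ card S) = (1 + a) ^ card A"
  using prod_add[of A "\<lambda>_. a" "\<lambda>_. 1"] by (simp add: add.commute)

lemma ln_3_le: "ln (3::real) \<le> 10/9"
proof -
  have "exp 1 > (27/10::real)"
    using e_approx_32 by (simp add: abs_if split: if_split_asm)
  hence "(27/10::real) ^ 10 \<le> exp 1 ^ 10" by (intro power_mono) auto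
  hence "(3::real) ^ 9 \<le> exp 10"
    using order_trans[of "19683::real" "(27/10) ^ 10"] by (simp add: power_divide flip: exp_of_nat_mult)
  hence "ln ((3::real) ^ 9) \<le> 10"
    by (metis exp_le_cancel_iff exp_ln zero_less_numeral zero_less_power)
  thus ?thesis using ln_realpow[of 3 9] by simp
qed

lemma ln_4_ge: "4/3 \<le> ln (4::real)"
  using ln2_ge_two_thirds ln_realpow[of 2 2] by simp

lemma le_ln_of_exp_power_le:
  assumes "exp 1 ^ m \<le> b ^ j" "j > 0" "b > 0"
  shows "real m / real j \<le> ln (b::real)"
proof -
  have "real m \<le> ln (b ^ j)" using assms by (simp add: ln_ge_iff flip: exp_of_nat_mult)
  hence "real m \<le> real j * ln b" using assms by (simp add: ln_realpow)
  thus ?thesis using assms by (simp add: divide_le_eq mult.commute)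
qed

lemma ln_2n_lower_bound:
  fixes n :: nat assumes "n \<ge> 3"
  shows "5 * (real n - 2) \<le> 2 * real n * ln (2 * real n)"
proof (cases "n \<le> 6")
  case True
  have "exp 1 ^ 7 \<le> (272/100::real) ^ 7" using e_less_272 by (intro power_mono) auto
  hence "7/4 \<le> ln (6::real)" using le_ln_of_exp_power_le[of 7 6 4] by (simp add: power_divide)
  also have "\<dots> \<le> ln (2 * real n)" using assms by simp
  finally have "2 * real n * (7/4) \<le> 2 * real n * ln (2 * real n)" by (intro mult_left_mono) auto
  thus ?thesis using True by simp
next
  case False
  have "exp 1 ^ 5 \<le> (272/100::real) ^ 5" using e_less_272 by (intro power_mono) auto
  hence "5/2 \<le> ln (14::real)" using le_ln_of_exp_power_le[of 5 14 2] by (simp add: power_divide)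
  also have "\<dots> \<le> ln (2 * real n)" using False by simp
  finally have "2 * real n * (5/2) \<le> 2 * real n * ln (2 * real n)" by (intro mult_left_mono) auto
  thus ?thesis by simp
qed

lemma three_pow_quarter_pow_le:
  fixes n k :: nat and c :: real
  assumes n: "n \<ge> 3" and c: "c > 0" and k: "real k = real n / 3 * (ln (2 * real n) + c)"
  shows "3 ^ n * (1/4) ^ k \<le> 9 * exp (- c)"
proof -
  define L where "L = ln (2 * real n)"
  have L: "0 \<le> L" using n by (simp add: L_def)
  have "(real n - 2) * ln 3 \<le> (real n - 2) * (10/9)"
    using ln_3_le n by (intro mult_left_mono) auto
  also have "\<dots> \<le> real n * L * (4/3) / 3"
    using ln_2n_lower_bound[OF n] by (simp add: L_def)
  also have "\<dots> \<le> real n * L * ln 4 / 3"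
    using ln_4_ge L by (intro divide_right_mono mult_left_mono) auto
  finally have log_part: "(real n - 2) * ln 3 \<le> real n * L * ln 4 / 3" .
  have "3 * (4/3) \<le> real n * ln 4" using ln_4_ge n by (intro mult_mono) auto
  hence c_part: "c \<le> c * real n * ln 4 / 3" using c mult_left_mono[of 1 _ c] by simp
  have "real k * ln 4 = real n * L * ln 4 / 3 + c * real n * ln 4 / 3"
    unfolding k L_def by (simp add: algebra_simps add_divide_distrib)
  hence exponent: "real n * ln 3 - real k * ln 4 \<le> 2 * ln 3 - c"
    using log_part c_part by (simp add: algebra_simps)
  have "3 ^ n * (1/4) ^ k = exp (real n * ln 3 - real k * ln 4)"
    by (simp add: exp_diff exp_of_nat_mult power_one_over)
  also have "\<dots> \<le> exp (2 * ln 3 - c)" using exponent by simp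
  also have "\<dots> = 9 * exp (- c)"
    by (simp add: exp_diff exp_minus exp_of_nat_mult[of 2, simplified] divide_inverse)
  finally show ?thesis .
qed

lemma weighted_eigenvalue_power_le:
  fixes n k s :: nat and c :: real
  assumes n: "n \<ge> 3" and k: "real k = real n / 3 * (ln (2 * real n) + c)" and s: "s \<le> n"
  shows "2 ^ s * hamming_eigenvalue n 3 s ^ (2 * k) \<le> (exp (- c) / real n) ^ s + 2 ^ s * (1/4) ^ k"
proof (cases "hamming_eigenvalue n 3 s \<ge> 0")
  case True
  have lam: "hamming_eigenvalue n 3 s = 1 - 3 * real s / (2 * real n)"
    by (simp add: hamming_eigenvalue_def)
  have "hamming_eigenvalue n 3 s ^ (2 * k) \<le> exp (- (3 * real s / (2 * real n))) ^ (2 * k)"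
    using True exp_ge_add_one_self[of "- (3 * real s / (2 * real n))"] unfolding lam
    by (intro power_mono) auto
  also have "\<dots> = exp (- (ln (2 * real n) + c)) ^ s"
    using n unfolding exp_of_nat_mult[symmetric] of_nat_mult k by (simp add: field_simps)
  also have "\<dots> = (exp (- c) / (2 * real n)) ^ s"
    using n unfolding minus_add_distrib exp_add by (simp add: exp_minus field_simps)
  finally have "2 ^ s * hamming_eigenvalue n 3 s ^ (2 * k) \<le> 2 ^ s * (exp (- c) / (2 * real n)) ^ s"
    by (intro mult_left_mono) auto
  also have "\<dots> = (exp (- c) / real n) ^ s" by (simp add: power_mult_distrib[symmetric])
  finally show ?thesis by (simp add: add_increasing2)
next
  case False
  have "- (1/2) \<le> hamming_eigenvalue n 3 s"
    using s n by (simp add: hamming_eigenvalue_def field_simps)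
  hence "(- hamming_eigenvalue n 3 s)\<^sup>2 \<le> (1/2)\<^sup>2"
    using False by (intro power_mono) auto
  hence "(hamming_eigenvalue n 3 s)\<^sup>2 \<le> 1/4" by (simp add: power2_eq_square)
  hence "hamming_eigenvalue n 3 s ^ (2 * k) \<le> (1/4) ^ k"
    by (simp add: power_mult power_mono)
  thus ?thesis by (simp add: add_increasing)
qed

lemma l2_hamming_nu_minus_pi_le:
  fixes n k :: nat and c :: real
  assumes n: "n \<ge> 3" and c: "c > 0" and k: "real k = real n / 3 * (ln (2 * real n) + c)"
  shows "3 ^ n * (\<Sum>x\<in>hamming_space n 3. (hamming_nu n 3 k x - hamming_pi n 3 x)\<^sup>2)
       \<le> exp (exp (- c)) - 1 + 9 * exp (- c)"
proof -
  define t where "t = exp (- c)"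
  let ?P = "Pow {..<n} - {{}}"
  have "3 ^ n * (\<Sum>x\<in>hamming_space n 3. (hamming_nu n 3 k x - hamming_pi n 3 x)\<^sup>2)
      = (\<Sum>S\<in>?P. 2 ^ card S * hamming_eigenvalue n 3 (card S) ^ (2 * k))"
    using l2_hamming_nu_minus_pi[of n 3 k] n by simp
  also have "\<dots> \<le> (\<Sum>S\<in>?P. (t / real n) ^ card S) + (\<Sum>S\<in>?P. 2 ^ card S * (1/4) ^ k)"
    unfolding sum.distrib[symmetric] t_def
    by (intro sum_mono weighted_eigenvalue_power_le[OF n k])
      (auto intro: card_mono[of "{..<n}", simplified])
  also have "(\<Sum>S\<in>?P. (t / real n) ^ card S) = (1 + t / real n) ^ n - 1"
    using sum_Pow_power_card[of "{..<n}" "t / real n"] by (simp add: sum.remove[of _ "{}"])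
  also have "(1 + t / real n) ^ n \<le> exp t"
    using n exp_ge_add_one_self[of "t / real n"]
      power_mono[of "1 + t / real n" "exp (t / real n)" n]
    by (simp add: t_def exp_of_nat_mult[symmetric] add_nonneg_nonneg)
  also have "(\<Sum>S\<in>?P. 2 ^ card S * (1/4::real) ^ k) \<le> (\<Sum>S\<in>Pow {..<n}. 2 ^ card S * (1/4) ^ k)"
    by (intro sum_mono2) auto
  also have "\<dots> = 3 ^ n * (1/4) ^ k"
    using sum_Pow_power_card[of "{..<n}" 2] by (simp add: sum_distrib_right[symmetric])
  also have "\<dots> \<le> 9 * t" unfolding t_def by (rule three_pow_quarter_pow_le[OF n c k])
  finally show ?thesis by (simp add: t_def)
qed

theorem theorem1p2:
  fixes n k :: nat and c :: real
  assumes "n \<ge> 3" and "c > 0"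
    and "real k = real n / 3 * (ln (2 * real n) + c)"
  shows "(tv_dist (hamming_space n 3) (hamming_nu n 3 k) (hamming_pi n 3))\<^sup>2
           \<le> 5 / 2 * (exp (exp (- c)) - 1)"
proof -
  let ?t = "exp (- c)"
  have "(tv_dist (hamming_space n 3) (hamming_nu n 3 k) (hamming_pi n 3))\<^sup>2
      \<le> real (card (hamming_space n 3))
          * (\<Sum>x\<in>hamming_space n 3. (hamming_nu n 3 k x - hamming_pi n 3 x)\<^sup>2) / 4"
    using assms(1) by (intro tv_dist_squared_le_l2 finite_hamming_space sum_hamming_nu_minus_pi) auto
  also have "\<dots> \<le> (exp ?t - 1 + 9 * ?t) / 4"
    using l2_hamming_nu_minus_pi_le[OF assms] by (simp add: card_hamming_space)
  also have "\<dots> \<le> 10 * (exp ?t - 1) / 4"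
    using exp_ge_add_one_self[of ?t]
    by (intro divide_right_mono) (simp_all add: algebra_simps del: exp_ge_add_one_self)
  finally show ?thesis by simp
qed

end
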